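(* Let $m\ge 2$ and $n\ge 1$ be integers and let $\mathcal P=(p_{i_1 i_2\dots i_m})\in\mathbb R^{[m,n]}$ be a transition probability tensor, i.e. $p_{i_1 i_2\dots i_m}\ge 0$ for all indices and $\sum_{i_1=1}^n p_{i_1 i_2\dots i_m}=1$ for all $(i_2,\dots,i_m)$. Let $R\in\mathbb R^{n\times n^{m-1}}$ be the flattening of $\mathcal P$ along the first index, and let $\mathbf{x}\in\mathbb R^n$ be a non-negative vector with $e^T\mathbf{x}\le 1$, where $e=(1,\dots,1)^T\in\mathbb R^n$. Let $\alpha\ge 0$. Then the $n\times n$ matrix $$-J(\mathbf{x}) = I-\alpha R\Big(I\otimes \mathbf{x}\otimes\cdots\otimes\mathbf{x}+\mathbf{x}\otimes I\otimes\mathbf{x}\otimes\cdots\otimes\mathbf{x}+\cdots+\mathbf{x}\otimes\cdots\otimes\mathbf{x}\otimes I\Big)$$ is non-singular whenever $\alpha<\frac{1}{m-1}$.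
   Context: $I$ denotes the $n\times n$ identity matrix and $\otimes$ the Kronecker product. Each summand inside the parentheses is a Kronecker product of $m-1$ factors, exactly one of which is $I$ and the remaining $m-2$ of which are $\mathbf{x}$ (viewed as an $n\times 1$ matrix); there are $m-1$ summands, one for each position of $I$, so each summand is an $n^{m-1}\times n$ matrix. The flattening $R$ along the first index is the $n\times n^{m-1}$ matrix whose column indexing is compatible with the Kronecker product, i.e. for all $y^{(2)},\dots,y^{(m)}\in\mathbb R^n$, $\big(R(y^{(2)}\otimes\cdots\otimes y^{(m)})\big)_i=\sum_{i_2,\dots,i_m=1}^n p_{i i_2\dots i_m}\,y^{(2)}_{i_2}\cdots y^{(m)}_{i_m}$. *)

theory Defs
  imports "Jordan_Normal_Form.Matrix"
begin

text \<open>Kronecker product of matrices (row/column indices: first factor most significant).\<close>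
definition kron :: "real mat \<Rightarrow> real mat \<Rightarrow> real mat" where
  "kron A B = mat (dim_row A * dim_row B) (dim_col A * dim_col B)
     (\<lambda>(i,j). A $$ (i div dim_row B, j div dim_col B) * B $$ (i mod dim_row B, j mod dim_col B))"

fun kron_list :: "real mat list \<Rightarrow> real mat" where
  "kron_list [] = 1\<^sub>m 1"
| "kron_list (A # As) = kron A (kron_list As)"

definition col_mat :: "real vec \<Rightarrow> real mat" where
  "col_mat x = mat (dim_vec x) 1 (\<lambda>(i,j). x $ i)"

text \<open>Base-n digits of j, k digits, most significant first
  (compatible with the index ordering of kron).\<close>
fun digits :: "nat \<Rightarrow> nat \<Rightarrow> nat \<Rightarrow> nat list" where
  "digits n 0 j = []"
| "digits n (Suc k) j = (j div n ^ k) mod n # digits n k (j mod n ^ k)"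

text \<open>Order-m, dimension-n tensor given as a function of its index list [i1,...,im]
  (indices 0-based). Flattening along the first index: n x n^(m-1) matrix.\<close>
definition flattening :: "nat \<Rightarrow> nat \<Rightarrow> (nat list \<Rightarrow> real) \<Rightarrow> real mat" where
  "flattening m n P = mat n (n ^ (m - 1)) (\<lambda>(i,j). P (i # digits n (m - 1) j))"

definition transition_probability_tensor :: "nat \<Rightarrow> nat \<Rightarrow> (nat list \<Rightarrow> real) \<Rightarrow> bool" where
  "transition_probability_tensor m n P \<longleftrightarrow>
     (\<forall>is. length is = m \<and> set is \<subseteq> {..<n} \<longrightarrow> P is \<ge> 0) \<and>
     (\<forall>is. length is = m - 1 \<and> set is \<subseteq> {..<n} \<longrightarrow> (\<Sum>i<n. P (i # is)) = 1)"

definition kron_sum :: "nat \<Rightarrow> nat \<Rightarrow> real vec \<Rightarrow> real mat" where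
  "kron_sum m n x = foldr (+)
     (map (\<lambda>k. kron_list (map (\<lambda>l. if l = k then 1\<^sub>m n else col_mat x) [0..<m - 1])) [0..<m - 1])
     (0\<^sub>m (n ^ (m - 1)) n)"

definition minus_J :: "nat \<Rightarrow> nat \<Rightarrow> (nat list \<Rightarrow> real) \<Rightarrow> real \<Rightarrow> real vec \<Rightarrow> real mat" where
  "minus_J m n P \<alpha> x = 1\<^sub>m n - \<alpha> \<cdot>\<^sub>m (flattening m n P * kron_sum m n x)"

end

theory Submission
  imports Defs "Jordan_Normal_Form.Determinant"
begin

(* The flattening R is column stochastic, and each summand of the Kronecker sum K has
   nonnegative entries and column sums at most 1, since column sums multiply under the
   Kronecker product and those of I and x are at most 1.  Hence M = R K is nonnegative with
   column sums at most m - 1, i.e. the l1 operator norm of alpha M is below 1, and a kernel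
   vector v of I - alpha M satisfies |v|_1 = |alpha M v|_1 <= alpha (m - 1) |v|_1, so v = 0. *)

definition nonneg_colsum_le :: "real \<Rightarrow> real mat \<Rightarrow> bool" where
  "nonneg_colsum_le c A \<longleftrightarrow>
     (\<forall>i<dim_row A. \<forall>j<dim_col A. 0 \<le> A $$ (i,j)) \<and>
     (\<forall>j<dim_col A. (\<Sum>i<dim_row A. A $$ (i,j)) \<le> c)"

lemma nonneg_colsum_leD:
  assumes "nonneg_colsum_le c A"
  shows "\<And>i j. i < dim_row A \<Longrightarrow> j < dim_col A \<Longrightarrow> 0 \<le> A $$ (i,j)"
    and "\<And>j. j < dim_col A \<Longrightarrow> (\<Sum>i<dim_row A. A $$ (i,j)) \<le> c"
  using assms unfolding nonneg_colsum_le_def by auto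

lemma nonneg_colsum_le_one_mat: "nonneg_colsum_le 1 (1\<^sub>m n)"
  unfolding nonneg_colsum_le_def by (auto simp: if_distrib cong: if_cong)

lemma nonneg_colsum_le_col_mat:
  assumes "\<forall>i<dim_vec x. 0 \<le> x $ i" and "(\<Sum>i<dim_vec x. x $ i) \<le> c"
  shows "nonneg_colsum_le c (col_mat x)"
  using assms unfolding nonneg_colsum_le_def col_mat_def by auto

lemma nonneg_colsum_le_zero_mat: "nonneg_colsum_le 0 (0\<^sub>m r k)"
  unfolding nonneg_colsum_le_def by auto

lemma nonneg_colsum_le_add:
  assumes A: "A \<in> carrier_mat r k" and B: "B \<in> carrier_mat r k"
    and "nonneg_colsum_le c A" and "nonneg_colsum_le d B"
  shows "nonneg_colsum_le (c + d) (A + B)"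
  using assms unfolding nonneg_colsum_le_def by (auto simp: sum.distrib intro: add_mono)

lemma nonneg_colsum_le_mult:
  assumes A: "A \<in> carrier_mat r k" and B: "B \<in> carrier_mat k l"
    and "nonneg_colsum_le c A" and "nonneg_colsum_le d B" and "0 \<le> c"
  shows "nonneg_colsum_le (c * d) (A * B)"
proof -
  have nonnegA: "\<And>i j. i < r \<Longrightarrow> j < k \<Longrightarrow> 0 \<le> A $$ (i,j)"
    and colsumA: "\<And>j. j < k \<Longrightarrow> (\<Sum>i<r. A $$ (i,j)) \<le> c"
    and nonnegB: "\<And>i j. i < k \<Longrightarrow> j < l \<Longrightarrow> 0 \<le> B $$ (i,j)"
    and colsumB: "\<And>j. j < l \<Longrightarrow> (\<Sum>i<k. B $$ (i,j)) \<le> d"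
    using nonneg_colsum_leD[OF assms(3)] nonneg_colsum_leD[OF assms(4)] A B by auto
  have entry: "(A * B) $$ (i,j) = (\<Sum>h<k. A $$ (i,h) * B $$ (h,j))" if "i < r" "j < l" for i j
    using that A B by (simp add: scalar_prod_def lessThan_atLeast0)
  have "(\<Sum>i<r. (A * B) $$ (i,j)) \<le> c * d" if j: "j < l" for j
  proof -
    have "(\<Sum>i<r. (A * B) $$ (i,j)) = (\<Sum>h<k. (\<Sum>i<r. A $$ (i,h)) * B $$ (h,j))"
      using j by (simp add: entry sum.swap[of _ "{..<r}"] sum_distrib_right)
    also have "\<dots> \<le> (\<Sum>h<k. c * B $$ (h,j))"
      using colsumA nonnegB j by (intro sum_mono mult_right_mono) auto
    also have "\<dots> \<le> c * d"
      using colsumB[OF j] \<open>0 \<le> c\<close> by (simp add: sum_distrib_left[symmetric] mult_left_mono)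
    finally show ?thesis .
  qed
  moreover have "0 \<le> (A * B) $$ (i,j)" if "i < r" "j < l" for i j
    using that nonnegA nonnegB by (auto simp: entry intro!: sum_nonneg mult_nonneg_nonneg)
  ultimately show ?thesis
    using A B unfolding nonneg_colsum_le_def by auto
qed

lemma invertible_mat_if_trivial_kernel:
  fixes A :: "'a :: field mat"
  assumes A: "A \<in> carrier_mat n n"
    and kernel: "\<And>v. v \<in> carrier_vec n \<Longrightarrow> A *\<^sub>v v = 0\<^sub>v n \<Longrightarrow> v = 0\<^sub>v n"
  shows "invertible_mat A"
proof -
  have "det A \<noteq> 0" using det_0_iff_vec_prod_zero_field[OF A] kernel by auto
  from det_non_zero_imp_unit[OF A this, of "()"]
  obtain B where "B \<in> carrier_mat n n" "B * A = 1\<^sub>m n" "A * B = 1\<^sub>m n"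
    unfolding Units_def ring_mat_def by auto
  with A show ?thesis
    unfolding invertible_mat_def inverts_mat_def by auto
qed

lemma sum_abs_mult_mat_vec_le:
  assumes A: "A \<in> carrier_mat r k" and "nonneg_colsum_le c A" and v: "v \<in> carrier_vec k"
  shows "(\<Sum>i<r. \<bar>(A *\<^sub>v v) $ i\<bar>) \<le> c * (\<Sum>j<k. \<bar>v $ j\<bar>)"
proof -
  have nonneg: "\<And>i j. i < r \<Longrightarrow> j < k \<Longrightarrow> 0 \<le> A $$ (i,j)"
    and colsum: "\<And>j. j < k \<Longrightarrow> (\<Sum>i<r. A $$ (i,j)) \<le> c"
    using nonneg_colsum_leD[OF assms(2)] A by auto
  have "(\<Sum>i<r. \<bar>(A *\<^sub>v v) $ i\<bar>) = (\<Sum>i<r. \<bar>\<Sum>j<k. A $$ (i,j) * v $ j\<bar>)"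
    using A v by (intro sum.cong) (auto simp: scalar_prod_def lessThan_atLeast0)
  also have "\<dots> \<le> (\<Sum>i<r. \<Sum>j<k. A $$ (i,j) * \<bar>v $ j\<bar>)"
    using nonneg by (intro sum_mono order.trans[OF sum_abs]) (simp add: abs_mult)
  also have "\<dots> = (\<Sum>j<k. (\<Sum>i<r. A $$ (i,j)) * \<bar>v $ j\<bar>)"
    by (subst sum.swap) (simp add: sum_distrib_right)
  also have "\<dots> \<le> (\<Sum>j<k. c * \<bar>v $ j\<bar>)"
    using colsum by (intro sum_mono mult_right_mono) auto
  finally show ?thesis by (simp add: sum_distrib_left)
qed

lemma invertible_one_minus_smult_mat:
  assumes A: "A \<in> carrier_mat n n" and "nonneg_colsum_le c A"
    and "0 \<le> \<alpha>" and "\<alpha> * c < 1"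
  shows "invertible_mat (1\<^sub>m n - \<alpha> \<cdot>\<^sub>m A)"
proof (rule invertible_mat_if_trivial_kernel)
  show "1\<^sub>m n - \<alpha> \<cdot>\<^sub>m A \<in> carrier_mat n n" using A by auto
next
  fix v assume v: "v \<in> carrier_vec n" and "(1\<^sub>m n - \<alpha> \<cdot>\<^sub>m A) *\<^sub>v v = 0\<^sub>v n"
  then have fixpoint: "v $ i = \<alpha> * (A *\<^sub>v v) $ i" if "i < n" for i
    using A that by (auto dest!: arg_cong[where f = "\<lambda>w. w $ i"]
        simp: minus_mult_distrib_mat_vec[of _ n n] scalar_prod_def sum_distrib_left algebra_simps)
  define S where "S = (\<Sum>j<n. \<bar>v $ j\<bar>)"
  have "S = \<alpha> * (\<Sum>i<n. \<bar>(A *\<^sub>v v) $ i\<bar>)"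
    using fixpoint \<open>0 \<le> \<alpha>\<close> by (simp add: S_def sum_distrib_left abs_mult)
  also have "\<dots> \<le> \<alpha> * (c * S)"
    unfolding S_def using sum_abs_mult_mat_vec_le[OF assms(1,2) v] \<open>0 \<le> \<alpha>\<close>
    by (rule mult_left_mono)
  finally have "S \<le> (\<alpha> * c) * S" by simp
  moreover have "0 \<le> S" by (simp add: S_def sum_nonneg)
  ultimately have "S = 0" using \<open>\<alpha> * c < 1\<close>
    by (metis mult_le_cancel_right1 not_le order.antisym)
  then show "v = 0\<^sub>v n"
    using v by (intro eq_vecI) (auto simp: S_def sum_nonneg_eq_0_iff)
qed

lemma sum_lessThan_mult_div_mod:
  fixes f :: "nat \<Rightarrow> nat \<Rightarrow> 'a :: comm_monoid_add"
  shows "(\<Sum>i<a * b. f (i div b) (i mod b)) = (\<Sum>q<a. \<Sum>r<b. f q r)"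
proof (induction a)
  case (Suc a)
  have "{..<Suc a * b} = {..<a * b} \<union> {a * b..<a * b + b}" by auto
  then have "(\<Sum>i<Suc a * b. f (i div b) (i mod b))
      = (\<Sum>i<a * b. f (i div b) (i mod b)) + (\<Sum>i=a * b..<a * b + b. f (i div b) (i mod b))"
    by (simp add: sum.union_disjoint ivl_disj_int)
  also have "(\<Sum>i=a * b..<a * b + b. f (i div b) (i mod b)) = (\<Sum>r<b. f a r)"
    by (rule sum.reindex_bij_witness[of _ "\<lambda>i. i - a * b" "\<lambda>r. a * b + r", symmetric]) auto
  finally show ?case using Suc by simp
qed simp

lemma div_mod_less_of_less_mult:
  fixes i :: nat
  assumes "i < a * b"
  shows "i div b < a" and "i mod b < b"
  using assms by (auto simp: less_mult_imp_div_less) (cases "b = 0"; simp)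

lemma nonneg_colsum_le_kron:
  assumes "nonneg_colsum_le c A" and "nonneg_colsum_le d B" and "0 \<le> c"
  shows "nonneg_colsum_le (c * d) (kron A B)"
  unfolding nonneg_colsum_le_def
proof (intro conjI allI impI)
  let ?rA = "dim_row A" and ?rB = "dim_row B" and ?cB = "dim_col B"
  fix j assume j: "j < dim_col (kron A B)"
  then have j': "j div ?cB < dim_col A" "j mod ?cB < ?cB"
    by (auto simp: kron_def div_mod_less_of_less_mult)
  have "(\<Sum>i<dim_row (kron A B). kron A B $$ (i,j))
      = (\<Sum>i<?rA * ?rB. A $$ (i div ?rB, j div ?cB) * B $$ (i mod ?rB, j mod ?cB))"
    using j by (intro sum.cong) (auto simp: kron_def)
  also have "\<dots> = (\<Sum>i<?rA. A $$ (i, j div ?cB)) * (\<Sum>h<?rB. B $$ (h, j mod ?cB))"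
    unfolding sum_product by (rule sum_lessThan_mult_div_mod)
  also have "\<dots> \<le> c * d"
    using nonneg_colsum_leD[OF assms(1)] nonneg_colsum_leD[OF assms(2)] j' \<open>0 \<le> c\<close>
    by (intro mult_mono sum_nonneg) auto
  finally show "(\<Sum>i<dim_row (kron A B). kron A B $$ (i,j)) \<le> c * d" .
next
  fix i j assume "i < dim_row (kron A B)" "j < dim_col (kron A B)"
  then show "0 \<le> kron A B $$ (i,j)"
    using nonneg_colsum_leD[OF assms(1)] nonneg_colsum_leD[OF assms(2)]
    by (auto simp: kron_def div_mod_less_of_less_mult intro!: mult_nonneg_nonneg)
qed

lemma kron_list_carrier_mat:
  "kron_list As \<in> carrier_mat (prod_list (map dim_row As)) (prod_list (map dim_col As))"
  by (induction As) (auto simp: kron_def)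

lemma nonneg_colsum_le_kron_list:
  "\<forall>A\<in>set As. nonneg_colsum_le 1 A \<Longrightarrow> nonneg_colsum_le 1 (kron_list As)"
  using nonneg_colsum_le_kron[of 1 _ 1] by (induction As) (auto simp: nonneg_colsum_le_one_mat)

lemma foldr_add_carrier_mat:
  "\<forall>A\<in>set As. A \<in> carrier_mat r k \<Longrightarrow> foldr (+) As (0\<^sub>m r k) \<in> carrier_mat r k"
  by (induction As) auto

lemma nonneg_colsum_le_foldr_add:
  fixes c :: real
  assumes "\<forall>A\<in>set As. A \<in> carrier_mat r k \<and> nonneg_colsum_le c A"
  shows "nonneg_colsum_le (real (length As) * c) (foldr (+) As (0\<^sub>m r k))"
  using assms
proof (induction As)
  case Nil
  then show ?case by (simp add: nonneg_colsum_le_zero_mat)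
next
  case (Cons A As)
  then have "nonneg_colsum_le (c + real (length As) * c) (A + foldr (+) As (0\<^sub>m r k))"
    by (intro nonneg_colsum_le_add[of _ r k] foldr_add_carrier_mat) auto
  then show ?case by (simp add: algebra_simps)
qed

lemma length_digits: "length (digits n k j) = k"
  by (induction k arbitrary: j) auto

lemma set_digits_subset: "0 < n \<Longrightarrow> set (digits n k j) \<subseteq> {..<n}"
  by (induction k arbitrary: j) auto

lemma flattening_carrier_mat: "flattening m n P \<in> carrier_mat n (n ^ (m - 1))"
  by (simp add: flattening_def)

lemma nonneg_colsum_le_flattening:
  assumes "transition_probability_tensor m n P" and "1 \<le> m" and "0 < n"
  shows "nonneg_colsum_le 1 (flattening m n P)"
proof -
  have "length (digits n (m - 1) j) = m - 1" "set (digits n (m - 1) j) \<subseteq> {..<n}" for j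
    using set_digits_subset[OF \<open>0 < n\<close>] by (auto simp: length_digits)
  with assms(1,2) show ?thesis
    unfolding nonneg_colsum_le_def transition_probability_tensor_def flattening_def
    by auto
qed

lemma kron_list_one_at_carrier_mat:
  assumes "x \<in> carrier_vec n" and "k < N"
  shows "kron_list (map (\<lambda>l. if l = k then 1\<^sub>m n else col_mat x) [0..<N]) \<in> carrier_mat (n ^ N) n"
    (is "kron_list ?As \<in> _")
proof -
  have rows: "map dim_row ?As = replicate N n"
    using assms(1) by (intro nth_equalityI) (auto simp: col_mat_def)
  have cols: "map dim_col ?As = map (\<lambda>l. if l = k then n else 1) [0..<N]"
    by (simp add: col_mat_def)
  have "prod_list (map (\<lambda>l. if l = k then n else 1) [0..<N]) = n"
    using \<open>k < N\<close> by (simp flip: prod.distinct_set_conv_list)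
  with kron_list_carrier_mat[of ?As] show ?thesis
    unfolding rows cols by (simp add: prod_list_replicate)
qed

lemma kron_sum_carrier_mat: "x \<in> carrier_vec n \<Longrightarrow> kron_sum m n x \<in> carrier_mat (n ^ (m - 1)) n"
  unfolding kron_sum_def by (intro foldr_add_carrier_mat) (auto intro: kron_list_one_at_carrier_mat)

lemma nonneg_colsum_le_kron_sum:
  assumes x: "x \<in> carrier_vec n" and "\<forall>i<n. 0 \<le> x $ i" and "(\<Sum>i<n. x $ i) \<le> 1"
  shows "nonneg_colsum_le (real (m - 1)) (kron_sum m n x)"
proof -
  define Ks where "Ks = map (\<lambda>k. kron_list (map (\<lambda>l. if l = k then 1\<^sub>m n else col_mat x)
    [0..<m - 1])) [0..<m - 1]"
  have "nonneg_colsum_le 1 (col_mat x)"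
    using assms by (intro nonneg_colsum_le_col_mat) auto
  then have "\<forall>K\<in>set Ks. K \<in> carrier_mat (n ^ (m - 1)) n \<and> nonneg_colsum_le 1 K"
    unfolding Ks_def
    by (auto intro: kron_list_one_at_carrier_mat[OF x] intro!: nonneg_colsum_le_kron_list
        simp: nonneg_colsum_le_one_mat)
  from nonneg_colsum_le_foldr_add[OF this] show ?thesis
    by (simp add: kron_sum_def Ks_def)
qed

theorem proposition3p1:
  fixes m n :: nat and P :: "nat list \<Rightarrow> real" and x :: "real vec" and \<alpha> :: real
  assumes "m \<ge> 2" and "n \<ge> 1"
    and "transition_probability_tensor m n P"
    and "x \<in> carrier_vec n" and "\<forall>i<n. x $ i \<ge> 0" and "(\<Sum>i<n. x $ i) \<le> 1"
    and "\<alpha> \<ge> 0" and "\<alpha> < 1 / real (m - 1)"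
  shows "invertible_mat (minus_J m n P \<alpha> x)"
proof -
  let ?R = "flattening m n P" and ?K = "kron_sum m n x"
  have R: "?R \<in> carrier_mat n (n ^ (m - 1))" "nonneg_colsum_le 1 ?R"
    using flattening_carrier_mat nonneg_colsum_le_flattening[OF assms(3)] assms(1,2) by auto
  have K: "?K \<in> carrier_mat (n ^ (m - 1)) n" "nonneg_colsum_le (real (m - 1)) ?K"
    by (fact kron_sum_carrier_mat[OF assms(4)]) (fact nonneg_colsum_le_kron_sum[OF assms(4-6)])
  have "nonneg_colsum_le (real (m - 1)) (?R * ?K)"
    using nonneg_colsum_le_mult[OF R(1) K(1) R(2) K(2)] by simp
  moreover have "?R * ?K \<in> carrier_mat n n"
    using R K by auto
  moreover have "\<alpha> * real (m - 1) < 1"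
    using assms(1,8) by (simp add: field_simps)
  ultimately show ?thesis
    unfolding minus_J_def using assms(7) by (intro invertible_one_minus_smult_mat) auto
qed

end
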